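(* Let $M,N$ be indecomposable non-projective $A_n^\ell$-modules and let $f\in\mathrm{Hom}(M,N)$ be nonzero with $\mathrm{Im} f=\mathrm{rad}^t(N)$, where $t$ is an integer such that there is no epimorphism from $M$ onto $\mathrm{rad}^s(N)$ for any $s<t$. Then $\underline{f}=0$ if and only if $\underline{\mathrm{Hom}}(M,N)=0$.
   Context: $A_n^\ell=kQ/I$ ($k$ algebraically closed), $Q$ the cyclic quiver with vertices $1,\dots,n$ and arrows $i\to i+1$, $n\to 1$, $I$ generated by all paths of length $\ell+1$. $\underline{\mathrm{Hom}}(M,N)$ is $\mathrm{Hom}(M,N)$ modulo morphisms factoring through projective modules, and $\underline{f}$ is the class of $f$ there. *)

theory Defs
  imports "Jordan_Normal_Form.Matrix" "HOL-Computational_Algebra.Polynomial"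
begin

text \<open>Finite-dimensional modules over the Nakayama algebra A_n^l = kQ/I, Q the cyclic
quiver with vertices 0,...,n-1 and arrows i -> (i+1) mod n, I generated by all paths of
length l+1, are represented as quiver representations: a vector space k^(dims V i) at
each vertex i and a matrix (maps V i) for the arrow i -> (i+1) mod n.\<close>

record 'a rep =
  dims :: "nat \<Rightarrow> nat"
  maps :: "nat \<Rightarrow> 'a mat"

definition alg_closed_type :: "'a::field itself \<Rightarrow> bool" where
  "alg_closed_type _ \<longleftrightarrow> (\<forall>p :: 'a poly. degree p > 0 \<longrightarrow> (\<exists>x. poly p x = 0))"

definition nxt :: "nat \<Rightarrow> nat \<Rightarrow> nat" where
  "nxt n i = (i + 1) mod n"

fun path_map :: "nat \<Rightarrow> 'a::field rep \<Rightarrow> nat \<Rightarrow> nat \<Rightarrow> 'a mat" where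
  "path_map n V 0 i = 1\<^sub>m (dims V i)"
| "path_map n V (Suc k) i = maps V ((i + k) mod n) * path_map n V k i"

definition is_rep :: "nat \<Rightarrow> nat \<Rightarrow> 'a::field rep \<Rightarrow> bool" where
  "is_rep n l V \<longleftrightarrow>
     (\<forall>i<n. maps V i \<in> carrier_mat (dims V (nxt n i)) (dims V i)) \<and>
     (\<forall>i<n. path_map n V (Suc l) i = 0\<^sub>m (dims V ((i + Suc l) mod n)) (dims V i))"

definition is_hom :: "nat \<Rightarrow> 'a::field rep \<Rightarrow> 'a rep \<Rightarrow> (nat \<Rightarrow> 'a mat) \<Rightarrow> bool" where
  "is_hom n V W F \<longleftrightarrow>
     (\<forall>i<n. F i \<in> carrier_mat (dims W i) (dims V i)) \<and>
     (\<forall>i<n. F (nxt n i) * maps V i = maps W i * F i)"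

definition zero_mor :: "nat \<Rightarrow> 'a::field rep \<Rightarrow> 'a rep \<Rightarrow> (nat \<Rightarrow> 'a mat) \<Rightarrow> bool" where
  "zero_mor n V W F \<longleftrightarrow> (\<forall>i<n. F i = 0\<^sub>m (dims W i) (dims V i))"

definition id_hom :: "nat \<Rightarrow> 'a::field rep \<Rightarrow> (nat \<Rightarrow> 'a mat) \<Rightarrow> bool" where
  "id_hom n V F \<longleftrightarrow> (\<forall>i<n. F i = 1\<^sub>m (dims V i))"

definition indecomposable :: "nat \<Rightarrow> nat \<Rightarrow> 'a::field rep \<Rightarrow> bool" where
  "indecomposable n l V \<longleftrightarrow> is_rep n l V \<and> (\<exists>i<n. dims V i > 0) \<and>
     (\<forall>E. is_hom n V V E \<and> (\<forall>i<n. E i * E i = E i) \<longrightarrow> zero_mor n V V E \<or> id_hom n V E)"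

definition surj_hom :: "nat \<Rightarrow> 'a::field rep \<Rightarrow> 'a rep \<Rightarrow> (nat \<Rightarrow> 'a mat) \<Rightarrow> bool" where
  "surj_hom n V W F \<longleftrightarrow>
     (\<forall>i<n. \<forall>y \<in> carrier_vec (dims W i). \<exists>x \<in> carrier_vec (dims V i). F i *\<^sub>v x = y)"

definition projective :: "nat \<Rightarrow> nat \<Rightarrow> 'a::field rep \<Rightarrow> bool" where
  "projective n l P \<longleftrightarrow> is_rep n l P \<and>
     (\<forall>X Y g h. is_rep n l X \<and> is_rep n l Y \<and> is_hom n X Y g \<and> surj_hom n X Y g \<and> is_hom n P Y h
        \<longrightarrow> (\<exists>h'. is_hom n P X h' \<and> (\<forall>i<n. g i * h' i = h i)))"

definition img :: "'a::field rep \<Rightarrow> (nat \<Rightarrow> 'a mat) \<Rightarrow> nat \<Rightarrow> 'a vec set" where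
  "img V F i = {F i *\<^sub>v x | x. x \<in> carrier_vec (dims V i)}"

text \<open>rad^t(N) = J^t N; at vertex i it is the image of the unique path of length t ending at i.\<close>
definition radpow :: "nat \<Rightarrow> 'a::field rep \<Rightarrow> nat \<Rightarrow> nat \<Rightarrow> 'a vec set" where
  "radpow n N t i = (let j = (i + t * n - t) mod n in
     {path_map n N t j *\<^sub>v x | x. x \<in> carrier_vec (dims N j)})"

definition stably_zero :: "nat \<Rightarrow> nat \<Rightarrow> 'a::field rep \<Rightarrow> 'a rep \<Rightarrow> (nat \<Rightarrow> 'a mat) \<Rightarrow> bool" where
  "stably_zero n l M N f \<longleftrightarrow>
     (\<exists>P g h. projective n l P \<and> is_hom n M P g \<and> is_hom n P N h \<and> (\<forall>i<n. f i = h i * g i))"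

definition stable_hom_zero :: "nat \<Rightarrow> nat \<Rightarrow> 'a::field rep \<Rightarrow> 'a rep \<Rightarrow> bool" where
  "stable_hom_zero n l M N \<longleftrightarrow> (\<forall>g. is_hom n M N g \<longrightarrow> stably_zero n l M N g)"

end

(*
  Indecomposable A_n^l-modules are cyclic. Let h + 1 be the Loewy length of V and v an element
  at a vertex i that the path p_h of length h from i does not kill. By elimination there is a
  linear functional R with R(p_h v) = 1 and R(q v) = 0 for the shorter paths q from i that end
  where p_h ends. Then w |-> sum R(q w) p' y, summed over the factorisations p_h = q p', is a
  morphism V -> Y sending v to y whenever y is killed by the paths of length h + 1. For y = v it
  is a nonzero idempotent endomorphism, hence the identity; consequently every morphism out of V
  is determined by its value at v.

  Let v generate M and g : M -> N. By induction on r <= t, g v lies in rad^r N: write g v = p z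
  with p of length r. If the longest nonzero path of N kills z, then z lies in rad N, so g v lies
  in rad^(r+1) N. Otherwise z generates N as well, which forces Im g = rad^r N, excluded by the
  minimality of t when r < t. So g v lies in rad^t N = Im f, say g v = f u. If f = b a factors
  through a projective P, the morphism c : M -> P with c v = a u satisfies b c v = g v, hence
  b c = g.
*)
theory Submission
  imports Defs "HOL-Number_Theory.Cong"
begin

section \<open>Linear combinations and row functionals\<close>

lemma mult_zero_mat_vec [simp]: "v \<in> carrier_vec c \<Longrightarrow> 0\<^sub>m r c *\<^sub>v v = 0\<^sub>v r"
  by (intro eq_vecI) (auto simp: scalar_prod_def)

lemma mult_mat_zero_vec [simp]: "A \<in> carrier_mat r c \<Longrightarrow> A *\<^sub>v 0\<^sub>v c = 0\<^sub>v r"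
  by (intro eq_vecI) auto

lemma eq_mat_by_mult_vecI:
  fixes A B :: "'a::field mat"
  assumes "A \<in> carrier_mat m d" "B \<in> carrier_mat m d"
    and "\<And>w. w \<in> carrier_vec d \<Longrightarrow> A *\<^sub>v w = B *\<^sub>v w"
  shows "A = B"
proof (intro eq_matI)
  fix i j assume i: "i < dim_row B" and j: "j < dim_col B"
  have "(A *\<^sub>v unit_vec d j) $ i = (B *\<^sub>v unit_vec d j) $ i" using assms(3)[of "unit_vec d j"] by simp
  then show "A $$ (i,j) = B $$ (i,j)" using assms(1,2) i j by simp
qed (use assms in auto)

definition lincomb_vec :: "nat \<Rightarrow> 'b set \<Rightarrow> ('b \<Rightarrow> 'a::field) \<Rightarrow> ('b \<Rightarrow> 'a vec) \<Rightarrow> 'a vec" where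
  "lincomb_vec d S c u = vec d (\<lambda>r. \<Sum>p\<in>S. c p * u p $ r)"

lemma dim_lincomb_vec [simp]: "dim_vec (lincomb_vec d S c u) = d"
  unfolding lincomb_vec_def by simp

lemma lincomb_vec_carrier [simp]: "lincomb_vec d S c u \<in> carrier_vec d"
  unfolding lincomb_vec_def by simp

lemma lincomb_vec_cong:
  assumes "\<And>p. p \<in> S \<Longrightarrow> c p = c' p" and "\<And>p. p \<in> S \<Longrightarrow> u p = u' p"
  shows "lincomb_vec d S c u = lincomb_vec d S c' u'"
  unfolding lincomb_vec_def using assms by (intro eq_vecI) auto

lemma lincomb_vec_mono_neutral:
  assumes "finite S" and "T \<subseteq> S" and "\<And>p. p \<in> S - T \<Longrightarrow> c p = 0 \<or> u p = 0\<^sub>v d"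
  shows "lincomb_vec d S c u = lincomb_vec d T c u"
proof (intro eq_vecI)
  fix r assume "r < dim_vec (lincomb_vec d T c u)"
  then have r: "r < d" unfolding lincomb_vec_def by simp
  have "(\<Sum>p\<in>S. c p * u p $ r) = (\<Sum>p\<in>T. c p * u p $ r)"
  proof (rule sum.mono_neutral_right)
    show "\<forall>p\<in>S - T. c p * u p $ r = 0"
      using assms(3) r by fastforce
  qed (use assms in auto)
  then show "lincomb_vec d S c u $ r = lincomb_vec d T c u $ r"
    unfolding lincomb_vec_def using r by simp
qed (simp add: lincomb_vec_def)

lemma lincomb_vec_reindex:
  "inj_on f S \<Longrightarrow> lincomb_vec d (f ` S) c u = lincomb_vec d S (c \<circ> f) (u \<circ> f)"
  unfolding lincomb_vec_def by (simp add: sum.reindex)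

lemma lincomb_vec_delta:
  assumes "finite S" and "h \<in> S" and "u h \<in> carrier_vec d"
    and "\<And>p. p \<in> S \<Longrightarrow> c p = (if p = h then 1 else 0)"
  shows "lincomb_vec d S c u = u h"
proof -
  have "lincomb_vec d S c u = vec d (\<lambda>r. \<Sum>p\<in>S. if p = h then u p $ r else 0)"
    unfolding lincomb_vec_def using assms(4) by (intro eq_vecI) (auto intro!: sum.cong)
  also have "\<dots> = u h" using assms(1-3) by (intro eq_vecI) (auto simp: sum.delta')
  finally show ?thesis .
qed

lemma mult_mat_lincomb_vec:
  fixes A :: "'a::field mat"
  assumes A: "A \<in> carrier_mat m d" and S: "finite S" and u: "\<And>p. p \<in> S \<Longrightarrow> u p \<in> carrier_vec d"
  shows "A *\<^sub>v lincomb_vec d S c u = lincomb_vec m S c (\<lambda>p. A *\<^sub>v u p)"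
proof (intro eq_vecI)
  fix r assume "r < dim_vec (lincomb_vec m S c (\<lambda>p. A *\<^sub>v u p))"
  then have r: "r < m" unfolding lincomb_vec_def by simp
  have "(A *\<^sub>v lincomb_vec d S c u) $ r = (\<Sum>j<d. A $$ (r,j) * (\<Sum>p\<in>S. c p * u p $ j))"
    using A r by (simp add: lincomb_vec_def scalar_prod_def lessThan_atLeast0)
  also have "\<dots> = (\<Sum>p\<in>S. c p * (\<Sum>j<d. A $$ (r,j) * u p $ j))"
    by (simp add: sum_distrib_left sum.swap[of _ S] ac_simps)
  also have "\<dots> = (\<Sum>p\<in>S. c p * (A *\<^sub>v u p) $ r)"
  proof (intro sum.cong refl arg_cong[where f = "\<lambda>x. c _ * x"])
    fix p assume "p \<in> S"
    then have "dim_vec (u p) = d" using u by auto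
    then show "(\<Sum>j<d. A $$ (r,j) * u p $ j) = (A *\<^sub>v u p) $ r"
      using A r by (auto simp: scalar_prod_def lessThan_atLeast0)
  qed
  finally show "(A *\<^sub>v lincomb_vec d S c u) $ r = lincomb_vec m S c (\<lambda>p. A *\<^sub>v u p) $ r"
    unfolding lincomb_vec_def using r by simp
qed (use A in \<open>simp add: lincomb_vec_def\<close>)

lemma lincomb_vec_mem_range:
  fixes A :: "'a::field mat"
  assumes A: "A \<in> carrier_mat m d" and S: "finite S"
    and u: "\<And>p. p \<in> S \<Longrightarrow> u p \<in> {A *\<^sub>v x | x. x \<in> carrier_vec d}"
  shows "lincomb_vec m S c u \<in> {A *\<^sub>v x | x. x \<in> carrier_vec d}"
proof -
  have "\<forall>p\<in>S. \<exists>x. x \<in> carrier_vec d \<and> u p = A *\<^sub>v x" using u by blast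
  then obtain x where x: "\<forall>p\<in>S. x p \<in> carrier_vec d \<and> u p = A *\<^sub>v x p" by (metis bchoice)
  have "lincomb_vec m S c u = lincomb_vec m S c (\<lambda>p. A *\<^sub>v x p)"
    using x by (intro lincomb_vec_cong) auto
  also have "\<dots> = A *\<^sub>v lincomb_vec d S c x"
    using x by (intro mult_mat_lincomb_vec[OF A S, symmetric]) auto
  finally show ?thesis by auto
qed

definition row_apply :: "'a::field mat \<Rightarrow> 'a vec \<Rightarrow> 'a" where
  "row_apply R z = (R *\<^sub>v z) $ 0"

lemma row_apply_zero [simp]: "R \<in> carrier_mat 1 d \<Longrightarrow> row_apply R (0\<^sub>v d) = 0"
  unfolding row_apply_def by simp

lemma row_apply_eq_sum:
  assumes "R \<in> carrier_mat 1 d" and "z \<in> carrier_vec d"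
  shows "row_apply R z = (\<Sum>c<d. R $$ (0, c) * z $ c)"
  unfolding row_apply_def using assms by (simp add: scalar_prod_def lessThan_atLeast0)

lemma row_apply_mult:
  assumes "R \<in> carrier_mat 1 d" and "P \<in> carrier_mat d e" and "z \<in> carrier_vec e"
  shows "row_apply (R * P) z = row_apply R (P *\<^sub>v z)"
  unfolding row_apply_def using assms by simp

lemma row_apply_minus_smult:
  fixes R P :: "'a::field mat"
  assumes R: "R \<in> carrier_mat 1 d" and P: "P \<in> carrier_mat d d" and z: "z \<in> carrier_vec d"
  shows "row_apply (R - c \<cdot>\<^sub>m (R * P)) z = row_apply R z - c * row_apply R (P *\<^sub>v z)"
proof -
  have "(R - c \<cdot>\<^sub>m (R * P)) *\<^sub>v z = R *\<^sub>v z - (c \<cdot>\<^sub>m (R * P)) *\<^sub>v z"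
    using R P z by (intro minus_mult_distrib_mat_vec) auto
  moreover have "((c \<cdot>\<^sub>m (R * P)) *\<^sub>v z) $ 0 = c * ((R * P) *\<^sub>v z) $ 0"
    using R P z by (simp add: row_smult del: assoc_mult_mat_vec)
  ultimately show ?thesis
    unfolding row_apply_def using R P z by simp
qed

lemma row_functional_exists:
  fixes x :: "'a::field vec"
  assumes x: "x \<in> carrier_vec d" and x0: "x \<noteq> 0\<^sub>v d"
  shows "\<exists>R\<in>carrier_mat 1 d. row_apply R x = 1"
proof -
  obtain r0 where r0: "r0 < d" "x $ r0 \<noteq> 0"
    using x x0 by (metis carrier_vecD eq_vecI index_zero_vec)
  define R where "R = mat 1 d (\<lambda>(_, c). if c = r0 then inverse (x $ r0) else 0)"
  have "row_apply R x = (\<Sum>c\<in>{0..<d}. (if c = r0 then inverse (x $ r0) else 0) * x $ c)"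
    unfolding row_apply_def R_def using x by (simp add: scalar_prod_def)
  also have "\<dots> = (\<Sum>c\<in>{0..<d}. if c = r0 then inverse (x $ r0) * x $ c else 0)"
    by (rule sum.cong) auto
  also have "\<dots> = 1" using r0 by simp
  finally show ?thesis unfolding R_def by (intro bexI[of _ R]) (auto simp: R_def)
qed

section \<open>Path actions\<close>

lemma mod_add_right_cancel:
  fixes a b p n :: nat
  assumes "(a + p) mod n = (b + p) mod n"
  shows "a mod n = b mod n"
  using assms by (metis cong_add_rcancel_nat cong_def)

lemma mod_add_right_cancel_less:
  fixes a b s n :: nat
  assumes "a < n" and "b < n" and "(a + s) mod n = (b + s) mod n"
  shows "a = b"
  using mod_add_right_cancel[OF assms(3)] assms(1,2) by simp

lemma mod_add_mod_diff:
  fixes x m h n :: nat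
  assumes "m \<le> h"
  shows "((x + m) mod n + (h - m)) mod n = (x + h) mod n"
proof -
  have "((x + m) mod n + (h - m)) mod n = (x + m + (h - m)) mod n" by (rule mod_add_left_eq)
  then show ?thesis using assms by simp
qed

lemma nxt_mod_eq [simp]: "nxt n (x mod n) = Suc x mod n"
  unfolding nxt_def by (simp add: mod_Suc_eq)

lemma is_rep_maps_carrier:
  "is_rep n l V \<Longrightarrow> k < n \<Longrightarrow> maps V k \<in> carrier_mat (dims V (nxt n k)) (dims V k)"
  unfolding is_rep_def by auto

lemma is_hom_carrier: "is_hom n V W F \<Longrightarrow> k < n \<Longrightarrow> F k \<in> carrier_mat (dims W k) (dims V k)"
  unfolding is_hom_def by auto

lemma indecomposable_is_rep: "indecomposable n l V \<Longrightarrow> is_rep n l V"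
  unfolding indecomposable_def by auto

lemma img_lincomb_vec:
  assumes g: "is_hom n M N g" and k: "k < n" and S: "finite S"
    and u: "\<And>p. p \<in> S \<Longrightarrow> u p \<in> img M g k"
  shows "lincomb_vec (dims N k) S c u \<in> img M g k"
  using lincomb_vec_mem_range[OF is_hom_carrier[OF g k] S] u unfolding img_def by blast

abbreviation path_act :: "nat \<Rightarrow> 'a::field rep \<Rightarrow> nat \<Rightarrow> nat \<Rightarrow> 'a vec \<Rightarrow> 'a vec" where
  "path_act n V p k z \<equiv> path_map n V p k *\<^sub>v z"

definition paths_vanish :: "nat \<Rightarrow> 'a::field rep \<Rightarrow> nat \<Rightarrow> bool" where
  "paths_vanish n V m \<longleftrightarrow>
     (\<forall>k<n. \<forall>z\<in>carrier_vec (dims V k). path_act n V m k z = 0\<^sub>v (dims V ((k + m) mod n)))"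

definition path_lengths :: "nat \<Rightarrow> nat \<Rightarrow> nat \<Rightarrow> nat \<Rightarrow> nat set" where
  "path_lengths n i h k = {p. p \<le> h \<and> (k + p) mod n = (i + h) mod n}"

lemma finite_path_lengths [simp]: "finite (path_lengths n i h k)"
  unfolding path_lengths_def by auto

text \<open>At vertex \<open>k\<close> this is the matrix of \<open>w \<mapsto> \<Sum> R(q w) \<cdot> p' y\<close>, summed over the
  factorisations \<open>q p'\<close> of the path of length \<open>h\<close> from \<open>i\<close> with \<open>p'\<close> ending at \<open>k\<close>; the
  length of \<open>q\<close> runs through \<^const>\<open>path_lengths\<close>. For a generator \<open>v\<close> it is the morphism
  sending \<open>v\<close> to \<open>y\<close>.\<close>
definition extend_hom ::
    "nat \<Rightarrow> 'a::field rep \<Rightarrow> 'a rep \<Rightarrow> nat \<Rightarrow> nat \<Rightarrow> 'a mat \<Rightarrow> 'a vec \<Rightarrow> nat \<Rightarrow> 'a mat" where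
  "extend_hom n V Y i h R y k = mat (dims Y k) (dims V k)
     (\<lambda>(r, c). \<Sum>p\<in>path_lengths n i h k.
        (R * path_map n V p k) $$ (0, c) * path_act n Y (h - p) i y $ r)"

lemma extend_hom_carrier [simp]: "extend_hom n V Y i h R y k \<in> carrier_mat (dims Y k) (dims V k)"
  unfolding extend_hom_def by simp

text \<open>For indecomposable \<open>V\<close> this makes \<open>v\<close> a generator of \<open>V\<close> and \<open>h + 1\<close> the Loewy length
  of \<open>V\<close>: the functional \<open>R\<close> tells the path of length \<open>h\<close> from \<open>i\<close> apart from the shorter
  paths from \<open>i\<close> with the same end vertex.\<close>
definition generator :: "nat \<Rightarrow> 'a::field rep \<Rightarrow> nat \<Rightarrow> nat \<Rightarrow> 'a vec \<Rightarrow> 'a mat \<Rightarrow> bool" where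
  "generator n V i h v R \<longleftrightarrow> i < n \<and> v \<in> carrier_vec (dims V i) \<and> paths_vanish n V (Suc h) \<and>
     R \<in> carrier_mat 1 (dims V ((i + h) mod n)) \<and>
     (\<forall>p\<in>path_lengths n i h i. row_apply R (path_act n V p i v) = (if p = h then 1 else 0))"

context
  fixes n :: nat
  assumes n_pos: "0 < n"
begin

lemma path_map_carrier:
  assumes rV: "is_rep n l V" and k: "k < n"
  shows "path_map n V p k \<in> carrier_mat (dims V ((k + p) mod n)) (dims V k)"
proof (induction p)
  case (Suc p)
  have "maps V ((k + p) mod n) \<in> carrier_mat (dims V (Suc (k + p) mod n)) (dims V ((k + p) mod n))"
    using is_rep_maps_carrier[OF rV, of "(k + p) mod n"] n_pos by simp
  then show ?case using Suc by (simp add: add.commute)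
qed (use k in simp)

lemma path_act_carrier:
  assumes "is_rep n l V" and "k < n" and "z \<in> carrier_vec (dims V k)"
  shows "path_act n V p k z \<in> carrier_vec (dims V ((k + p) mod n))"
  by (rule mult_mat_vec_carrier[OF path_map_carrier[OF assms(1,2)] assms(3)])

lemma path_map_add:
  assumes rV: "is_rep n l V" and k: "k < n"
  shows "path_map n V (a + b) k = path_map n V b ((k + a) mod n) * path_map n V a k"
proof (induction b)
  case 0
  then show ?case using path_map_carrier[OF rV k, of a] by simp
next
  case (Suc b)
  have ka: "(k + a) mod n < n" using n_pos by simp
  have vertex: "((k + a) mod n + b) mod n = (k + (a + b)) mod n"
    by (simp add: mod_add_left_eq add.assoc)
  have m: "maps V ((k + (a + b)) mod n) \<in>
      carrier_mat (dims V (Suc (k + (a + b)) mod n)) (dims V ((k + (a + b)) mod n))"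
    using is_rep_maps_carrier[OF rV, of "(k + (a + b)) mod n"] n_pos by simp
  have "path_map n V (a + Suc b) k = maps V ((k + (a + b)) mod n) * path_map n V (a + b) k" by simp
  also have "\<dots> = maps V ((k + (a + b)) mod n) * (path_map n V b ((k + a) mod n) * path_map n V a k)"
    using Suc by simp
  also have "\<dots> = (maps V ((k + (a + b)) mod n) * path_map n V b ((k + a) mod n)) * path_map n V a k"
    using m path_map_carrier[OF rV ka, of b] path_map_carrier[OF rV k, of a] vertex
    by (intro assoc_mult_mat[symmetric]) auto
  also have "\<dots> = path_map n V (Suc b) ((k + a) mod n) * path_map n V a k"
    using vertex by simp
  finally show ?case .
qed

lemma path_act_add:
  assumes rV: "is_rep n l V" and k: "k < n" and z: "z \<in> carrier_vec (dims V k)"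
  shows "path_act n V (a + b) k z = path_act n V b ((k + a) mod n) (path_act n V a k z)"
proof -
  have "(k + a) mod n < n" using n_pos by simp
  then show ?thesis
    using path_map_add[OF rV k, of a b] path_map_carrier[OF rV _, of "(k + a) mod n" b]
      path_map_carrier[OF rV k, of a] z
    by (simp add: assoc_mult_mat_vec)
qed

lemma path_act_swap:
  assumes rV: "is_rep n l V" and k: "k < n" and z: "z \<in> carrier_vec (dims V k)"
  shows "path_act n V r ((k + q) mod n) (path_act n V q k z) =
    path_act n V q ((k + r) mod n) (path_act n V r k z)"
  using path_act_add[OF rV k z, of q r] path_act_add[OF rV k z, of r q] by (simp add: add.commute)

lemma path_act_one:
  assumes rV: "is_rep n l V" and k: "k < n" and z: "z \<in> carrier_vec (dims V k)"
  shows "path_act n V 1 k z = maps V k *\<^sub>v z"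
  using is_rep_maps_carrier[OF rV k] z k by simp

lemma maps_path_act:
  assumes rV: "is_rep n l V" and i: "i < n" and z: "z \<in> carrier_vec (dims V i)"
    and vertex: "(i + a) mod n = k"
  shows "maps V k *\<^sub>v path_act n V a i z = path_act n V (Suc a) i z"
  using path_map_carrier[OF rV i, of a] is_rep_maps_carrier[OF rV, of k] vertex z n_pos
  by (auto simp: add.commute)

lemma hom_path_map:
  assumes rV: "is_rep n l V" and rW: "is_rep n l W" and F: "is_hom n V W F" and k: "k < n"
  shows "F ((k + p) mod n) * path_map n V p k = path_map n W p k * F k"
proof (induction p)
  case 0
  then show ?case using is_hom_carrier[OF F k] k by simp
next
  case (Suc p)
  let ?q = "(k + p) mod n"
  have q: "?q < n" using n_pos by simp
  have FSq: "F (Suc (k + p) mod n) \<in>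
      carrier_mat (dims W (Suc (k + p) mod n)) (dims V (Suc (k + p) mod n))"
    using is_hom_carrier[OF F, of "Suc (k + p) mod n"] n_pos by simp
  have Fq: "F ?q \<in> carrier_mat (dims W ?q) (dims V ?q)" by (rule is_hom_carrier[OF F q])
  have mV: "maps V ?q \<in> carrier_mat (dims V (Suc (k + p) mod n)) (dims V ?q)"
    using is_rep_maps_carrier[OF rV q] by simp
  have mW: "maps W ?q \<in> carrier_mat (dims W (Suc (k + p) mod n)) (dims W ?q)"
    using is_rep_maps_carrier[OF rW q] by simp
  have commute: "F (Suc (k + p) mod n) * maps V ?q = maps W ?q * F ?q"
    using F q unfolding is_hom_def by (metis nxt_mod_eq)
  have pV: "path_map n V p k \<in> carrier_mat (dims V ?q) (dims V k)" by (rule path_map_carrier[OF rV k])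
  have pW: "path_map n W p k \<in> carrier_mat (dims W ?q) (dims W k)" by (rule path_map_carrier[OF rW k])
  have Fk: "F k \<in> carrier_mat (dims W k) (dims V k)" by (rule is_hom_carrier[OF F k])
  have "F ((k + Suc p) mod n) * path_map n V (Suc p) k
      = (F (Suc (k + p) mod n) * maps V ?q) * path_map n V p k"
    using FSq mV pV by (simp add: add.commute)
  also have "\<dots> = maps W ?q * (F ?q * path_map n V p k)"
    unfolding commute using mW Fq pV by simp
  also have "\<dots> = path_map n W (Suc p) k * F k"
    unfolding Suc using mW pW Fk by (simp add: add.commute)
  finally show ?case .
qed

lemma hom_path_act:
  assumes rV: "is_rep n l V" and rW: "is_rep n l W" and F: "is_hom n V W F" and k: "k < n"
    and z: "z \<in> carrier_vec (dims V k)"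
  shows "F ((k + p) mod n) *\<^sub>v path_act n V p k z = path_act n W p k (F k *\<^sub>v z)"
proof -
  have "(k + p) mod n < n" using n_pos by simp
  then show ?thesis
    using hom_path_map[OF rV rW F k, of p] path_map_carrier[OF rV k, of p]
      path_map_carrier[OF rW k, of p] is_hom_carrier[OF F, of "(k + p) mod n"] is_hom_carrier[OF F k] z
    by (metis assoc_mult_mat_vec)
qed

lemma path_act_vanish_beyond:
  assumes rV: "is_rep n l V" and k: "k < n" and z: "z \<in> carrier_vec (dims V k)"
    and vanish: "path_act n V (Suc h) k z = 0\<^sub>v (dims V ((k + Suc h) mod n))" and q: "h < q"
  shows "path_act n V q k z = 0\<^sub>v (dims V ((k + q) mod n))"
proof -
  obtain e where e: "q = Suc h + e" using less_imp_Suc_add[OF q] by auto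
  have kh: "(k + Suc h) mod n < n" using n_pos by simp
  have "path_act n V q k z = path_act n V e ((k + Suc h) mod n) (path_act n V (Suc h) k z)"
    unfolding e by (rule path_act_add[OF rV k z])
  also have "\<dots> = path_act n V e ((k + Suc h) mod n) (0\<^sub>v (dims V ((k + Suc h) mod n)))"
    unfolding vanish ..
  also have "\<dots> = 0\<^sub>v (dims V ((k + q) mod n))"
    using path_map_carrier[OF rV kh, of e] unfolding e by (simp add: mod_add_left_eq add.assoc)
  finally show ?thesis .
qed

lemma path_act_vanish_beyond_bound:
  assumes rV: "is_rep n l V" and k: "k < n" and z: "z \<in> carrier_vec (dims V k)" and q: "l < q"
  shows "path_act n V q k z = 0\<^sub>v (dims V ((k + q) mod n))"
proof (rule path_act_vanish_beyond[OF rV k z _ q])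
  show "path_act n V (Suc l) k z = 0\<^sub>v (dims V ((k + Suc l) mod n))"
    using rV k z unfolding is_rep_def by auto
qed

lemma path_lengths_vertex:
  assumes k: "k < n" and p: "p \<in> path_lengths n i h k"
  shows "(i + (h - p)) mod n = k"
proof -
  have "p \<le> h" and "(k + p) mod n = (i + h) mod n" using p unfolding path_lengths_def by auto
  then have "(i + (h - p) + p) mod n = (k + p) mod n" by simp
  then have "(i + (h - p)) mod n = k mod n" by (rule mod_add_right_cancel)
  then show ?thesis using k by simp
qed

section \<open>Indecomposable modules are cyclic\<close>

lemma extend_hom_mult_vec:
  assumes rV: "is_rep n l V" and k: "k < n"
    and R: "R \<in> carrier_mat 1 (dims V ((i + h) mod n))" and w: "w \<in> carrier_vec (dims V k)"
  shows "extend_hom n V Y i h R y k *\<^sub>v w =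
    lincomb_vec (dims Y k) (path_lengths n i h k)
      (\<lambda>p. row_apply R (path_act n V p k w)) (\<lambda>p. path_act n Y (h - p) i y)"
proof (intro eq_vecI)
  let ?S = "path_lengths n i h k"
  fix r assume "r < dim_vec (lincomb_vec (dims Y k) ?S
      (\<lambda>p. row_apply R (path_act n V p k w)) (\<lambda>p. path_act n Y (h - p) i y))"
  then have r: "r < dims Y k" by simp
  have "(extend_hom n V Y i h R y k *\<^sub>v w) $ r =
      (\<Sum>c<dims V k. (\<Sum>p\<in>?S. (R * path_map n V p k) $$ (0, c) * path_act n Y (h - p) i y $ r) * w $ c)"
    using r w unfolding extend_hom_def by (simp add: scalar_prod_def lessThan_atLeast0)
  also have "\<dots> = (\<Sum>p\<in>?S. path_act n Y (h - p) i y $ r *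
      (\<Sum>c<dims V k. (R * path_map n V p k) $$ (0, c) * w $ c))"
    by (simp add: sum_distrib_left sum_distrib_right ac_simps sum.swap[of _ ?S])
  also have "\<dots> = (\<Sum>p\<in>?S. row_apply R (path_act n V p k w) * path_act n Y (h - p) i y $ r)"
  proof (intro sum.cong refl)
    fix p assume p: "p \<in> ?S"
    have P: "path_map n V p k \<in> carrier_mat (dims V ((i + h) mod n)) (dims V k)"
      using path_map_carrier[OF rV k, of p] p unfolding path_lengths_def by simp
    have "(\<Sum>c<dims V k. (R * path_map n V p k) $$ (0, c) * w $ c) = row_apply (R * path_map n V p k) w"
      using R P w by (simp add: row_apply_eq_sum[of _ "dims V k"])
    also have "\<dots> = row_apply R (path_act n V p k w)"
      using R P w by (rule row_apply_mult)
    finally show "path_act n Y (h - p) i y $ r *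
        (\<Sum>c<dims V k. (R * path_map n V p k) $$ (0, c) * w $ c) =
        row_apply R (path_act n V p k w) * path_act n Y (h - p) i y $ r"
      by simp
  qed
  finally show "(extend_hom n V Y i h R y k *\<^sub>v w) $ r = lincomb_vec (dims Y k) ?S
      (\<lambda>p. row_apply R (path_act n V p k w)) (\<lambda>p. path_act n Y (h - p) i y) $ r"
    unfolding lincomb_vec_def using r by simp
qed (simp add: extend_hom_def)

lemma hom_mult_extend_hom:
  assumes rV: "is_rep n l V" and rY: "is_rep n l Y" and rZ: "is_rep n l Z" and F: "is_hom n Y Z F"
    and i: "i < n" and k: "k < n"
    and R: "R \<in> carrier_mat 1 (dims V ((i + h) mod n))" and y: "y \<in> carrier_vec (dims Y i)"
  shows "F k * extend_hom n V Y i h R y k = extend_hom n V Z i h R (F i *\<^sub>v y) k"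
proof (rule eq_mat_by_mult_vecI)
  have Fk: "F k \<in> carrier_mat (dims Z k) (dims Y k)" by (rule is_hom_carrier[OF F k])
  then show "F k * extend_hom n V Y i h R y k \<in> carrier_mat (dims Z k) (dims V k)" by simp
  show "extend_hom n V Z i h R (F i *\<^sub>v y) k \<in> carrier_mat (dims Z k) (dims V k)" by simp
  fix w :: "'a vec" assume w: "w \<in> carrier_vec (dims V k)"
  let ?S = "path_lengths n i h k" and ?c = "\<lambda>p. row_apply R (path_act n V p k w)"
  have u: "path_act n Y (h - p) i y \<in> carrier_vec (dims Y k)" if "p \<in> ?S" for p
    using path_act_carrier[OF rY i y, of "h - p"] path_lengths_vertex[OF k that] by simp
  have "(F k * extend_hom n V Y i h R y k) *\<^sub>v w = F k *\<^sub>v (extend_hom n V Y i h R y k *\<^sub>v w)"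
    by (rule assoc_mult_mat_vec[OF Fk extend_hom_carrier w])
  also have "\<dots> = F k *\<^sub>v lincomb_vec (dims Y k) ?S ?c (\<lambda>p. path_act n Y (h - p) i y)"
    by (simp add: extend_hom_mult_vec[OF rV k R w])
  also have "\<dots> = lincomb_vec (dims Z k) ?S ?c (\<lambda>p. F k *\<^sub>v path_act n Y (h - p) i y)"
    by (rule mult_mat_lincomb_vec[OF Fk finite_path_lengths u])
  also have "\<dots> = lincomb_vec (dims Z k) ?S ?c (\<lambda>p. path_act n Z (h - p) i (F i *\<^sub>v y))"
  proof (rule lincomb_vec_cong)
    fix p assume "p \<in> ?S"
    then show "F k *\<^sub>v path_act n Y (h - p) i y = path_act n Z (h - p) i (F i *\<^sub>v y)"
      using hom_path_act[OF rY rZ F i y, of "h - p"] path_lengths_vertex[OF k] by simp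
  qed simp
  also have "\<dots> = extend_hom n V Z i h R (F i *\<^sub>v y) k *\<^sub>v w"
    by (simp add: extend_hom_mult_vec[OF rV k R w])
  finally show "(F k * extend_hom n V Y i h R y k) *\<^sub>v w =
      extend_hom n V Z i h R (F i *\<^sub>v y) k *\<^sub>v w" .
qed

lemma extend_hom_nxt_mult_maps:
  assumes rV: "is_rep n l V" and k: "k < n"
    and R: "R \<in> carrier_mat 1 (dims V ((i + h) mod n))" and w: "w \<in> carrier_vec (dims V k)"
    and y_vanish: "path_act n Y (Suc h) i y = 0\<^sub>v (dims Y ((i + Suc h) mod n))"
  shows "extend_hom n V Y i h R y (nxt n k) *\<^sub>v (maps V k *\<^sub>v w) =
    lincomb_vec (dims Y (nxt n k)) {q. q \<le> Suc h \<and> (k + q) mod n = (i + h) mod n}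
      (\<lambda>q. row_apply R (path_act n V q k w)) (\<lambda>q. path_act n Y (Suc h - q) i y)"
    (is "_ = lincomb_vec _ ?T ?c ?u")
proof -
  let ?k1 = "nxt n k"
  have k1: "?k1 < n" "?k1 = Suc k mod n" using n_pos k unfolding nxt_def by auto
  have shift: "(?k1 + p) mod n = (k + Suc p) mod n" for p
    unfolding k1(2) by (simp add: mod_add_left_eq)
  have "extend_hom n V Y i h R y ?k1 *\<^sub>v (maps V k *\<^sub>v w) =
      lincomb_vec (dims Y ?k1) (path_lengths n i h ?k1)
      (\<lambda>p. row_apply R (path_act n V p ?k1 (maps V k *\<^sub>v w))) (\<lambda>p. path_act n Y (h - p) i y)"
    using is_rep_maps_carrier[OF rV k] w by (intro extend_hom_mult_vec[OF rV k1(1) R]) auto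
  also have "\<dots> = lincomb_vec (dims Y ?k1) (path_lengths n i h ?k1) (?c \<circ> Suc) (?u \<circ> Suc)"
  proof (rule lincomb_vec_cong)
    fix p
    have "path_act n V (Suc p) k w = path_act n V p ?k1 (path_act n V 1 k w)"
      using path_act_add[OF rV k w, of 1 p] k1(2) by simp
    then show "row_apply R (path_act n V p ?k1 (maps V k *\<^sub>v w)) = (?c \<circ> Suc) p"
      using path_act_one[OF rV k w] by simp
  qed simp
  also have "\<dots> = lincomb_vec (dims Y ?k1) (Suc ` path_lengths n i h ?k1) ?c ?u"
    by (simp add: lincomb_vec_reindex)
  also have "\<dots> = lincomb_vec (dims Y ?k1) ?T ?c ?u"
  proof (rule lincomb_vec_mono_neutral[symmetric])
    show "Suc ` path_lengths n i h ?k1 \<subseteq> ?T"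
      unfolding path_lengths_def using shift by auto
    fix q assume q: "q \<in> ?T - Suc ` path_lengths n i h ?k1"
    have "q = 0"
    proof (rule ccontr)
      assume "q \<noteq> 0"
      then obtain p where "q = Suc p" using not0_implies_Suc by blast
      then show False using q shift[of p] unfolding path_lengths_def by auto
    qed
    then have "k mod n = (i + h) mod n" using q by simp
    then have "(i + Suc h) mod n = ?k1" unfolding k1(2) by (metis add_Suc_right mod_Suc_eq)
    then show "?c q = 0 \<or> ?u q = 0\<^sub>v (dims Y ?k1)" using y_vanish \<open>q = 0\<close> by simp
  qed simp
  finally show ?thesis .
qed

lemma maps_mult_extend_hom:
  assumes rV: "is_rep n l V" and rY: "is_rep n l Y" and i: "i < n" and k: "k < n"
    and R: "R \<in> carrier_mat 1 (dims V ((i + h) mod n))" and y: "y \<in> carrier_vec (dims Y i)"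
    and w: "w \<in> carrier_vec (dims V k)" and V_vanish: "paths_vanish n V (Suc h)"
  shows "maps Y k *\<^sub>v (extend_hom n V Y i h R y k *\<^sub>v w) =
    lincomb_vec (dims Y (nxt n k)) {q. q \<le> Suc h \<and> (k + q) mod n = (i + h) mod n}
      (\<lambda>q. row_apply R (path_act n V q k w)) (\<lambda>q. path_act n Y (Suc h - q) i y)"
    (is "_ = lincomb_vec _ ?T ?c ?u")
proof -
  let ?S = "path_lengths n i h k"
  have mY: "maps Y k \<in> carrier_mat (dims Y (nxt n k)) (dims Y k)" by (rule is_rep_maps_carrier[OF rY k])
  have "maps Y k *\<^sub>v (extend_hom n V Y i h R y k *\<^sub>v w) =
      maps Y k *\<^sub>v lincomb_vec (dims Y k) ?S ?c (\<lambda>p. path_act n Y (h - p) i y)"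
    by (simp add: extend_hom_mult_vec[OF rV k R w])
  also have "\<dots> = lincomb_vec (dims Y (nxt n k)) ?S ?c (\<lambda>p. maps Y k *\<^sub>v path_act n Y (h - p) i y)"
    using path_act_carrier[OF rY i y] path_lengths_vertex[OF k]
    by (intro mult_mat_lincomb_vec[OF mY]) auto
  also have "\<dots> = lincomb_vec (dims Y (nxt n k)) ?S ?c ?u"
  proof (rule lincomb_vec_cong)
    fix p assume p: "p \<in> ?S"
    then have "Suc (h - p) = Suc h - p" unfolding path_lengths_def by auto
    then show "maps Y k *\<^sub>v path_act n Y (h - p) i y = ?u p"
      using maps_path_act[OF rY i y path_lengths_vertex[OF k p]] by simp
  qed simp
  also have "\<dots> = lincomb_vec (dims Y (nxt n k)) ?T ?c ?u"
  proof (rule lincomb_vec_mono_neutral[symmetric])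
    show "?S \<subseteq> ?T" unfolding path_lengths_def by auto
    fix q assume "q \<in> ?T - ?S"
    then have "q = Suc h" and "(k + q) mod n = (i + h) mod n" unfolding path_lengths_def by auto
    then have "path_act n V q k w = 0\<^sub>v (dims V ((i + h) mod n))"
      using V_vanish k w unfolding paths_vanish_def by metis
    then show "?c q = 0 \<or> ?u q = 0\<^sub>v (dims Y (nxt n k))" using R by simp
  qed simp
  finally show ?thesis .
qed

lemma extend_hom_is_hom:
  assumes rV: "is_rep n l V" and rY: "is_rep n l Y" and i: "i < n"
    and R: "R \<in> carrier_mat 1 (dims V ((i + h) mod n))" and y: "y \<in> carrier_vec (dims Y i)"
    and V_vanish: "paths_vanish n V (Suc h)"
    and y_vanish: "path_act n Y (Suc h) i y = 0\<^sub>v (dims Y ((i + Suc h) mod n))"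
  shows "is_hom n V Y (extend_hom n V Y i h R y)"
  unfolding is_hom_def
proof (intro conjI allI impI)
  fix k assume k: "k < n"
  let ?E = "extend_hom n V Y i h R y"
  show "?E k \<in> carrier_mat (dims Y k) (dims V k)" by simp
  have mV: "maps V k \<in> carrier_mat (dims V (nxt n k)) (dims V k)" by (rule is_rep_maps_carrier[OF rV k])
  have mY: "maps Y k \<in> carrier_mat (dims Y (nxt n k)) (dims Y k)" by (rule is_rep_maps_carrier[OF rY k])
  show "?E (nxt n k) * maps V k = maps Y k * ?E k"
  proof (rule eq_mat_by_mult_vecI)
    show "?E (nxt n k) * maps V k \<in> carrier_mat (dims Y (nxt n k)) (dims V k)"
      by (rule mult_carrier_mat[OF extend_hom_carrier mV])
    show "maps Y k * ?E k \<in> carrier_mat (dims Y (nxt n k)) (dims V k)"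
      by (rule mult_carrier_mat[OF mY extend_hom_carrier])
    fix w :: "'a vec" assume w: "w \<in> carrier_vec (dims V k)"
    show "(?E (nxt n k) * maps V k) *\<^sub>v w = (maps Y k * ?E k) *\<^sub>v w"
      unfolding assoc_mult_mat_vec[OF extend_hom_carrier mV w]
        assoc_mult_mat_vec[OF mY extend_hom_carrier w]
        extend_hom_nxt_mult_maps[OF rV k R w y_vanish]
        maps_mult_extend_hom[OF rV rY i k R y w V_vanish] ..
  qed
qed

lemma extend_hom_generator:
  assumes rV: "is_rep n l V" and gen: "generator n V i h v R" and y: "y \<in> carrier_vec (dims Y i)"
  shows "extend_hom n V Y i h R y i *\<^sub>v v = y"
proof -
  have i: "i < n" and v: "v \<in> carrier_vec (dims V i)"
    and R: "R \<in> carrier_mat 1 (dims V ((i + h) mod n))"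
    and dual: "\<And>p. p \<in> path_lengths n i h i \<Longrightarrow>
      row_apply R (path_act n V p i v) = (if p = h then 1 else 0)"
    using gen unfolding generator_def by auto
  have "extend_hom n V Y i h R y i *\<^sub>v v = lincomb_vec (dims Y i) (path_lengths n i h i)
      (\<lambda>p. row_apply R (path_act n V p i v)) (\<lambda>p. path_act n Y (h - p) i y)"
    by (rule extend_hom_mult_vec[OF rV i R v])
  also have "\<dots> = path_act n Y (h - h) i y"
    by (rule lincomb_vec_delta) (use dual y in \<open>auto simp: path_lengths_def\<close>)
  also have "\<dots> = y" using y by simp
  finally show ?thesis .
qed

lemma extend_hom_self_eq_id:
  assumes ind: "indecomposable n l V" and gen: "generator n V i h v R" and k: "k < n"
  shows "extend_hom n V V i h R v k = 1\<^sub>m (dims V k)"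
proof -
  have rV: "is_rep n l V" using ind by (rule indecomposable_is_rep)
  have i: "i < n" and v: "v \<in> carrier_vec (dims V i)" and vanish: "paths_vanish n V (Suc h)"
    and R: "R \<in> carrier_mat 1 (dims V ((i + h) mod n))"
    and top: "row_apply R (path_act n V h i v) = 1"
    using gen unfolding generator_def path_lengths_def by auto
  let ?E = "extend_hom n V V i h R v"
  have hom: "is_hom n V V ?E"
    using vanish i v by (intro extend_hom_is_hom[OF rV rV i R v vanish]) (simp add: paths_vanish_def)
  have Ev: "?E i *\<^sub>v v = v" by (rule extend_hom_generator[OF rV gen v])
  have "?E k' * ?E k' = ?E k'" if "k' < n" for k'
    using hom_mult_extend_hom[OF rV rV rV hom i that R v] Ev by simp
  then have "zero_mor n V V ?E \<or> id_hom n V ?E" using ind hom unfolding indecomposable_def by blast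
  moreover have "\<not> zero_mor n V V ?E"
  proof
    assume "zero_mor n V V ?E"
    then have "v = 0\<^sub>v (dims V i)" using Ev v i unfolding zero_mor_def by auto
    then have "path_act n V h i v = 0\<^sub>v (dims V ((i + h) mod n))"
      using path_map_carrier[OF rV i, of h] by simp
    then show False using top R by simp
  qed
  ultimately show ?thesis using k unfolding id_hom_def by auto
qed

lemma hom_eq_extend_hom:
  assumes ind: "indecomposable n l V" and rY: "is_rep n l Y" and gen: "generator n V i h v R"
    and F: "is_hom n V Y F" and k: "k < n"
  shows "F k = extend_hom n V Y i h R (F i *\<^sub>v v) k"
proof -
  have rV: "is_rep n l V" using ind by (rule indecomposable_is_rep)
  have i: "i < n" and v: "v \<in> carrier_vec (dims V i)"
    and R: "R \<in> carrier_mat 1 (dims V ((i + h) mod n))"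
    using gen unfolding generator_def by auto
  have "F k = F k * extend_hom n V V i h R v k"
    using extend_hom_self_eq_id[OF ind gen k] is_hom_carrier[OF F k] by simp
  also have "\<dots> = extend_hom n V Y i h R (F i *\<^sub>v v) k"
    by (rule hom_mult_extend_hom[OF rV rV rY F i k R v])
  finally show ?thesis .
qed

lemma generator_expansion:
  assumes ind: "indecomposable n l V" and gen: "generator n V i h v R"
    and k: "k < n" and w: "w \<in> carrier_vec (dims V k)"
  shows "w = lincomb_vec (dims V k) (path_lengths n i h k)
    (\<lambda>p. row_apply R (path_act n V p k w)) (\<lambda>p. path_act n V (h - p) i v)"
proof -
  have R: "R \<in> carrier_mat 1 (dims V ((i + h) mod n))" using gen unfolding generator_def by auto
  show ?thesis
    using extend_hom_mult_vec[OF indecomposable_is_rep[OF ind] k R w, of V v]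
      extend_hom_self_eq_id[OF ind gen k] w by simp
qed

lemma path_act_shift_to_top:
  assumes rV: "is_rep n l V" and i: "i < n" and v: "v \<in> carrier_vec (dims V i)"
    and vanish: "path_act n V (Suc h) i v = 0\<^sub>v (dims V ((i + Suc h) mod n))"
    and m: "m \<in> path_lengths n i h i" and p: "p \<in> path_lengths n i h i" "m \<le> p"
  shows "path_act n V (h - m) ((i + h) mod n) (path_act n V p i v) =
    (if p = m then path_act n V h i v else 0\<^sub>v (dims V ((i + h) mod n)))"
proof -
  have vertex: "(i + p) mod n = (i + h) mod n" "(i + m) mod n = (i + h) mod n" and "m \<le> h"
    using m p unfolding path_lengths_def by auto
  then have shift: "path_act n V (h - m) ((i + h) mod n) (path_act n V p i v) =
      path_act n V (p + (h - m)) i v"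
    using path_act_add[OF rV i v, of p "h - m"] by simp
  show ?thesis
  proof (cases "p = m")
    case True
    then show ?thesis using shift \<open>m \<le> h\<close> by simp
  next
    case False
    have "(i + (p + (h - m))) mod n = ((i + p) mod n + (h - m)) mod n"
      by (simp add: mod_add_left_eq add.assoc)
    also have "\<dots> = ((i + m) mod n + (h - m)) mod n" using vertex by simp
    also have "\<dots> = (i + h) mod n" using \<open>m \<le> h\<close> by (rule mod_add_mod_diff)
    finally have "(i + (p + (h - m))) mod n = (i + h) mod n" .
    moreover have "path_act n V (p + (h - m)) i v = 0\<^sub>v (dims V ((i + (p + (h - m))) mod n))"
      by (rule path_act_vanish_beyond[OF rV i v vanish]) (use False p(2) \<open>m \<le> h\<close> in simp)
    ultimately show ?thesis using shift False by simp
  qed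
qed

text \<open>Subtracting \<open>R(q v)\<close> times \<open>R\<close> composed with the path of length \<open>h - m\<close>, where \<open>q\<close> has
  length \<open>m\<close>, makes \<open>R\<close> vanish on \<open>q v\<close>: that path moves \<open>q v\<close> to the top and kills the
  images of \<open>v\<close> under longer paths.\<close>
lemma separating_functional_step:
  assumes rV: "is_rep n l V" and i: "i < n" and v: "v \<in> carrier_vec (dims V i)"
    and vanish: "path_act n V (Suc h) i v = 0\<^sub>v (dims V ((i + Suc h) mod n))"
    and R: "R \<in> carrier_mat 1 (dims V ((i + h) mod n))"
    and top: "row_apply R (path_act n V h i v) = 1"
    and below: "\<forall>p\<in>path_lengths n i h i. m < p \<and> p < h \<longrightarrow> row_apply R (path_act n V p i v) = 0"
    and m: "m \<in> path_lengths n i h i" "m < h"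
  shows "\<exists>R'\<in>carrier_mat 1 (dims V ((i + h) mod n)). row_apply R' (path_act n V h i v) = 1 \<and>
    (\<forall>p\<in>path_lengths n i h i. m \<le> p \<and> p < h \<longrightarrow> row_apply R' (path_act n V p i v) = 0)"
proof -
  define j where "j = (i + h) mod n"
  define P where "P = path_map n V (h - m) j"
  define R' where "R' = R - row_apply R (path_act n V m i v) \<cdot>\<^sub>m (R * P)"
  have j: "j < n" unfolding j_def using n_pos by simp
  have "(j + (h - m)) mod n = ((i + m) mod n + (h - m)) mod n"
    using m(1) unfolding j_def path_lengths_def by simp
  also have "\<dots> = j" unfolding j_def using m(2) by (intro mod_add_mod_diff) simp
  finally have "(j + (h - m)) mod n = j" .
  then have P: "P \<in> carrier_mat (dims V j) (dims V j)"
    using path_map_carrier[OF rV j, of "h - m"] unfolding P_def by simp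
  have R': "R' \<in> carrier_mat 1 (dims V j)" using R P unfolding R'_def j_def by auto
  have R'_apply: "row_apply R' (path_act n V p i v) = row_apply R (path_act n V p i v) -
      row_apply R (path_act n V m i v) *
      row_apply R (if p = m then path_act n V h i v else 0\<^sub>v (dims V j))"
    if p: "p \<in> path_lengths n i h i" "m \<le> p" for p
  proof -
    have "path_act n V p i v \<in> carrier_vec (dims V j)"
      using path_act_carrier[OF rV i v, of p] p(1) unfolding path_lengths_def j_def by simp
    then have "row_apply R' (path_act n V p i v) = row_apply R (path_act n V p i v) -
        row_apply R (path_act n V m i v) * row_apply R (P *\<^sub>v path_act n V p i v)"
      unfolding R'_def using R[folded j_def] P by (intro row_apply_minus_smult)
    also have "P *\<^sub>v path_act n V p i v = (if p = m then path_act n V h i v else 0\<^sub>v (dims V j))"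
      unfolding P_def j_def by (rule path_act_shift_to_top[OF rV i v vanish m(1) p])
    finally show ?thesis .
  qed
  have h: "h \<in> path_lengths n i h i" by (simp add: path_lengths_def)
  have "row_apply R' (path_act n V h i v) = 1"
    using R'_apply[OF h] m(2) top R unfolding j_def by simp
  moreover have "row_apply R' (path_act n V p i v) = 0"
    if "p \<in> path_lengths n i h i" "m \<le> p" "p < h" for p
    using R'_apply[OF that(1,2)] below that top R unfolding j_def by auto
  ultimately show ?thesis using R' unfolding j_def by blast
qed

lemma separating_functional_exists:
  assumes rV: "is_rep n l V" and i: "i < n" and v: "v \<in> carrier_vec (dims V i)"
    and vanish: "path_act n V (Suc h) i v = 0\<^sub>v (dims V ((i + Suc h) mod n))"
    and top: "path_act n V h i v \<noteq> 0\<^sub>v (dims V ((i + h) mod n))" and m: "m \<le> h"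
  shows "\<exists>R\<in>carrier_mat 1 (dims V ((i + h) mod n)). row_apply R (path_act n V h i v) = 1 \<and>
    (\<forall>p\<in>path_lengths n i h i. m \<le> p \<and> p < h \<longrightarrow> row_apply R (path_act n V p i v) = 0)"
  using m
proof (induction m rule: inc_induct)
  case base
  show ?case using row_functional_exists[OF path_act_carrier[OF rV i v] top] by auto
next
  case (step m)
  then obtain R where R: "R \<in> carrier_mat 1 (dims V ((i + h) mod n))"
    and R_top: "row_apply R (path_act n V h i v) = 1"
    and below: "\<forall>p\<in>path_lengths n i h i. Suc m \<le> p \<and> p < h \<longrightarrow> row_apply R (path_act n V p i v) = 0"
    by blast
  show ?case
  proof (cases "m \<in> path_lengths n i h i")
    case True
    then show ?thesis
      using separating_functional_step[OF rV i v vanish R R_top _ True step(2)] below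
      by (simp add: Suc_le_eq)
  next
    case False
    then have "\<forall>p\<in>path_lengths n i h i. m \<le> p \<and> p < h \<longrightarrow> row_apply R (path_act n V p i v) = 0"
      using below by (metis Suc_leI le_neq_implies_less)
    then show ?thesis using R R_top by blast
  qed
qed

lemma generator_if_longest_path_nonzero:
  assumes rV: "is_rep n l V" and i: "i < n" and v: "v \<in> carrier_vec (dims V i)"
    and vanish: "paths_vanish n V (Suc h)"
    and top: "path_act n V h i v \<noteq> 0\<^sub>v (dims V ((i + h) mod n))"
  shows "\<exists>R. generator n V i h v R"
proof -
  have "path_act n V (Suc h) i v = 0\<^sub>v (dims V ((i + Suc h) mod n))"
    using vanish i v unfolding paths_vanish_def by blast
  then obtain R where "R \<in> carrier_mat 1 (dims V ((i + h) mod n))"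
    and "row_apply R (path_act n V h i v) = 1"
    and "\<forall>p\<in>path_lengths n i h i. p < h \<longrightarrow> row_apply R (path_act n V p i v) = 0"
    using separating_functional_exists[OF rV i v _ top, of 0] by auto
  then have "generator n V i h v R"
    unfolding generator_def using i v vanish by (auto simp: path_lengths_def)
  then show ?thesis ..
qed

lemma longest_nonzero_path_exists:
  assumes rV: "is_rep n l V" and nonzero: "\<exists>k<n. dims V k > 0"
  shows "\<exists>i<n. \<exists>v\<in>carrier_vec (dims V i). \<exists>h.
    path_act n V h i v \<noteq> 0\<^sub>v (dims V ((i + h) mod n)) \<and> paths_vanish n V (Suc h)"
proof -
  define H where "H r \<longleftrightarrow>
    (\<exists>k<n. \<exists>z\<in>carrier_vec (dims V k). path_act n V r k z \<noteq> 0\<^sub>v (dims V ((k + r) mod n)))" for r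
  obtain k0 where k0: "k0 < n" "dims V k0 > 0" using nonzero by auto
  have "H 0"
  proof -
    let ?z = "unit_vec (dims V k0) 0 :: 'a vec"
    have "?z $ 0 \<noteq> 0\<^sub>v (dims V k0) $ 0" using k0 by simp
    then have "?z \<noteq> 0\<^sub>v (dims V k0)" by metis
    then show ?thesis unfolding H_def using k0 by (auto intro!: exI[of _ k0] bexI[of _ ?z])
  qed
  have bound: "r \<le> l" if "H r" for r
    using that path_act_vanish_beyond_bound[OF rV] unfolding H_def by (meson not_le)
  define h where "h = Greatest H"
  have "H h" unfolding h_def by (rule GreatestI_nat[of H 0 l, OF \<open>H 0\<close> bound])
  moreover have "\<not> H (Suc h)"
    using Greatest_le_nat[of H _ l] bound unfolding h_def by fastforce
  ultimately show ?thesis unfolding H_def paths_vanish_def by blast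
qed

lemma generator_exists:
  assumes ind: "indecomposable n l V"
  shows "\<exists>i h v R. generator n V i h v R"
proof -
  have rV: "is_rep n l V" using ind by (rule indecomposable_is_rep)
  obtain i v h where i: "i < n" and v: "v \<in> carrier_vec (dims V i)"
    and top: "path_act n V h i v \<noteq> 0\<^sub>v (dims V ((i + h) mod n))" and vanish: "paths_vanish n V (Suc h)"
    using longest_nonzero_path_exists[OF rV] ind unfolding indecomposable_def by blast
  show ?thesis using generator_if_longest_path_nonzero[OF rV i v vanish top] by blast
qed

section \<open>Powers of the radical\<close>

lemma radpow_start_vertex:
  assumes k: "k < n"
  shows "((k + s * n - s) mod n + s) mod n = k"
proof -
  have "s \<le> s * n" using n_pos by simp
  then have "k + s * n - s + s = k + s * n" by linarith
  then have "((k + s * n - s) mod n + s) mod n = (k + s * n) mod n" by (simp add: mod_add_left_eq)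
  then show ?thesis using k by simp
qed

lemma radpow_iff:
  assumes k: "k < n"
  shows "y \<in> radpow n N s k \<longleftrightarrow>
    (\<exists>k0<n. (k0 + s) mod n = k \<and> (\<exists>z\<in>carrier_vec (dims N k0). y = path_act n N s k0 z))"
proof
  assume "y \<in> radpow n N s k"
  moreover have "(k + s * n - s) mod n < n" using n_pos by simp
  ultimately show "\<exists>k0<n. (k0 + s) mod n = k \<and> (\<exists>z\<in>carrier_vec (dims N k0). y = path_act n N s k0 z)"
    using radpow_start_vertex[OF k] unfolding radpow_def Let_def by blast
next
  assume "\<exists>k0<n. (k0 + s) mod n = k \<and> (\<exists>z\<in>carrier_vec (dims N k0). y = path_act n N s k0 z)"
  then obtain k0 z where k0: "k0 < n" "(k0 + s) mod n = k" and z: "z \<in> carrier_vec (dims N k0)"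
    and y: "y = path_act n N s k0 z" by blast
  have "(k + s * n - s) mod n < n" using n_pos by simp
  then have "(k + s * n - s) mod n = k0"
    by (rule mod_add_right_cancel_less[OF _ k0(1), where s = s])
      (use radpow_start_vertex[OF k, of s] k0(2) in simp)
  then show "y \<in> radpow n N s k" unfolding radpow_def Let_def using z y by auto
qed

lemma path_act_mem_radpow:
  assumes k0: "k0 < n" and z: "z \<in> carrier_vec (dims N k0)" and vertex: "(k0 + s) mod n = k"
    and k: "k < n"
  shows "path_act n N s k0 z \<in> radpow n N s k"
  using radpow_iff[OF k] k0 z vertex by blast

lemma radpow_path_act:
  assumes rN: "is_rep n l N" and k: "k < n" and x: "x \<in> radpow n N s k"
  shows "path_act n N r k x \<in> radpow n N (s + r) ((k + r) mod n)"
proof -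
  obtain k0 z where k0: "k0 < n" "(k0 + s) mod n = k" and z: "z \<in> carrier_vec (dims N k0)"
    and x: "x = path_act n N s k0 z"
    using x radpow_iff[OF k] by blast
  have "path_act n N r k x = path_act n N (s + r) k0 z"
    using path_act_add[OF rN k0(1) z, of s r] k0(2) x by simp
  moreover have vertex: "(k0 + (s + r)) mod n = (k + r) mod n"
    using k0(2) by (metis add.assoc mod_add_left_eq)
  moreover have "(k + r) mod n < n" using n_pos by simp
  ultimately show ?thesis using path_act_mem_radpow[OF k0(1) z vertex] by simp
qed

lemma radpow_antimono:
  assumes rN: "is_rep n l N" and k: "k < n" and le: "s \<le> s'"
  shows "radpow n N s' k \<subseteq> radpow n N s k"
proof
  fix y assume "y \<in> radpow n N s' k"
  then obtain k0 z where k0: "k0 < n" "(k0 + s') mod n = k" and z: "z \<in> carrier_vec (dims N k0)"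
    and y: "y = path_act n N s' k0 z"
    using radpow_iff[OF k] by blast
  have start: "(k0 + (s' - s)) mod n < n" using n_pos by simp
  have vertex: "((k0 + (s' - s)) mod n + s) mod n = k"
    using k0(2) le by (simp add: mod_add_left_eq)
  have "y = path_act n N s ((k0 + (s' - s)) mod n) (path_act n N (s' - s) k0 z)"
    using path_act_add[OF rN k0(1) z, of "s' - s" s] le y by simp
  then show "y \<in> radpow n N s k"
    using path_act_mem_radpow[OF start path_act_carrier[OF rN k0(1) z] vertex k] by simp
qed

lemma radpow_lincomb_vec:
  assumes rN: "is_rep n l N" and k: "k < n" and S: "finite S"
    and u: "\<And>p. p \<in> S \<Longrightarrow> u p \<in> radpow n N s k"
  shows "lincomb_vec (dims N k) S c u \<in> radpow n N s k"
proof -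
  define j where "j = (k + s * n - s) mod n"
  have "j < n" unfolding j_def using n_pos by simp
  then have "path_map n N s j \<in> carrier_mat (dims N k) (dims N j)"
    using path_map_carrier[OF rN, of j s] radpow_start_vertex[OF k, of s] unfolding j_def by simp
  then show ?thesis
    using lincomb_vec_mem_range[OF _ S] u unfolding radpow_def Let_def j_def[symmetric] by blast
qed

lemma mem_rad_if_longest_path_vanishes:
  assumes ind: "indecomposable n l N" and gen: "generator n N j b w R"
    and k: "k < n" and z: "z \<in> carrier_vec (dims N k)"
    and top: "path_act n N b k z = 0\<^sub>v (dims N ((k + b) mod n))"
  shows "z \<in> radpow n N 1 k"
proof -
  have rN: "is_rep n l N" using ind by (rule indecomposable_is_rep)
  have j: "j < n" and w: "w \<in> carrier_vec (dims N j)"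
    and R: "R \<in> carrier_mat 1 (dims N ((j + b) mod n))"
    using gen unfolding generator_def by auto
  define S where "S = {p \<in> path_lengths n j b k. p < b}"
  define c where "c p = row_apply R (path_act n N p k z)" for p
  have "z = lincomb_vec (dims N k) (path_lengths n j b k) c (\<lambda>p. path_act n N (b - p) j w)"
    unfolding c_def by (rule generator_expansion[OF ind gen k z])
  also have "\<dots> = lincomb_vec (dims N k) S c (\<lambda>p. path_act n N (b - p) j w)"
  proof (rule lincomb_vec_mono_neutral)
    show "S \<subseteq> path_lengths n j b k" unfolding S_def by auto
    fix p assume "p \<in> path_lengths n j b k - S"
    then have "p = b" "(k + b) mod n = (j + b) mod n" unfolding S_def path_lengths_def by auto
    then show "c p = 0 \<or> path_act n N (b - p) j w = 0\<^sub>v (dims N k)" unfolding c_def using top R by simp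
  qed simp
  also have "\<dots> \<in> radpow n N 1 k"
  proof (rule radpow_lincomb_vec[OF rN k])
    show "finite S" unfolding S_def by simp
    fix p assume p: "p \<in> S"
    then have "path_act n N (b - p) j w \<in> radpow n N (b - p) k"
      using path_act_mem_radpow[OF j w path_lengths_vertex[OF k] k] unfolding S_def by blast
    moreover have "1 \<le> b - p" using p unfolding S_def by auto
    ultimately show "path_act n N (b - p) j w \<in> radpow n N 1 k"
      using radpow_antimono[OF rN k] by blast
  qed
  finally show ?thesis .
qed

lemma img_subset_radpow:
  assumes indM: "indecomposable n l M" and rN: "is_rep n l N" and gen: "generator n M i h v R"
    and g: "is_hom n M N g" and gv: "g i *\<^sub>v v \<in> radpow n N r i" and k': "k' < n"
  shows "img M g k' \<subseteq> radpow n N r k'"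
proof
  have rM: "is_rep n l M" using indM by (rule indecomposable_is_rep)
  have i: "i < n" and R: "R \<in> carrier_mat 1 (dims M ((i + h) mod n))"
    using gen unfolding generator_def by auto
  fix y assume "y \<in> img M g k'"
  then obtain m where m: "m \<in> carrier_vec (dims M k')" and y: "y = g k' *\<^sub>v m"
    unfolding img_def by auto
  define c where "c p = row_apply R (path_act n M p k' m)" for p
  have "y = extend_hom n M N i h R (g i *\<^sub>v v) k' *\<^sub>v m"
    using y hom_eq_extend_hom[OF indM rN gen g k'] by simp
  also have "\<dots> = lincomb_vec (dims N k') (path_lengths n i h k') c
      (\<lambda>p. path_act n N (h - p) i (g i *\<^sub>v v))"
    unfolding c_def by (rule extend_hom_mult_vec[OF rM k' R m])
  also have "\<dots> \<in> radpow n N r k'"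
  proof (rule radpow_lincomb_vec[OF rN k' finite_path_lengths])
    fix p assume p: "p \<in> path_lengths n i h k'"
    have "path_act n N (h - p) i (g i *\<^sub>v v) \<in> radpow n N (r + (h - p)) k'"
      using radpow_path_act[OF rN i gv, of "h - p"] path_lengths_vertex[OF k' p] by simp
    then show "path_act n N (h - p) i (g i *\<^sub>v v) \<in> radpow n N r k'"
      using radpow_antimono[OF rN k', of r "r + (h - p)"] by auto
  qed
  finally show "y \<in> radpow n N r k'" .
qed

lemma radpow_subset_img:
  assumes rM: "is_rep n l M" and indN: "indecomposable n l N" and gen: "generator n N k b z R"
    and g: "is_hom n M N g" and i: "i < n" and v: "v \<in> carrier_vec (dims M i)"
    and gvz: "g i *\<^sub>v v = path_act n N r k z" and kr: "(k + r) mod n = i" and k': "k' < n"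
  shows "radpow n N r k' \<subseteq> img M g k'"
proof
  have rN: "is_rep n l N" using indN by (rule indecomposable_is_rep)
  have k: "k < n" and z: "z \<in> carrier_vec (dims N k)" using gen unfolding generator_def by auto
  fix y assume "y \<in> radpow n N r k'"
  then obtain k0 z0 where k0: "k0 < n" "(k0 + r) mod n = k'" and z0: "z0 \<in> carrier_vec (dims N k0)"
    and y: "y = path_act n N r k0 z0"
    using radpow_iff[OF k'] by blast
  let ?S = "path_lengths n k b k0"
  define c where "c p = row_apply R (path_act n N p k0 z0)" for p
  have z0_expansion: "z0 = lincomb_vec (dims N k0) ?S c (\<lambda>p. path_act n N (b - p) k z)"
    unfolding c_def by (rule generator_expansion[OF indN gen k0(1) z0])
  have "y = path_act n N r k0 (lincomb_vec (dims N k0) ?S c (\<lambda>p. path_act n N (b - p) k z))"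
    unfolding y by (rule arg_cong[OF z0_expansion])
  also have "\<dots> = lincomb_vec (dims N k') ?S c (\<lambda>p. path_act n N r k0 (path_act n N (b - p) k z))"
    by (rule mult_mat_lincomb_vec)
      (use path_map_carrier[OF rN k0(1), of r] k0(2) path_act_carrier[OF rN k z]
        path_lengths_vertex[OF k0(1)] in auto)
  also have "\<dots> \<in> img M g k'"
  proof (rule img_lincomb_vec[OF g k' finite_path_lengths])
    fix p assume p: "p \<in> ?S"
    have "(i + (b - p)) mod n = ((k + (b - p)) mod n + r) mod n"
      unfolding kr[symmetric] by (simp add: mod_add_left_eq mod_add_right_eq add_ac)
    then have vertex: "(i + (b - p)) mod n = k'" using path_lengths_vertex[OF k0(1) p] k0(2) by simp
    have "path_act n N r k0 (path_act n N (b - p) k z) = path_act n N (b - p) i (g i *\<^sub>v v)"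
      using path_act_swap[OF rN k z, of r "b - p"] path_lengths_vertex[OF k0(1) p] kr gvz by simp
    also have "\<dots> = g k' *\<^sub>v path_act n M (b - p) i v"
      using hom_path_act[OF rM rN g i v, of "b - p"] vertex by simp
    finally show "path_act n N r k0 (path_act n N (b - p) k z) \<in> img M g k'"
      using path_act_carrier[OF rM i v, of "b - p"] vertex unfolding img_def by auto
  qed
  finally show "y \<in> img M g k'" .
qed

lemma generator_image_in_radpow:
  assumes indM: "indecomposable n l M" and indN: "indecomposable n l N"
    and gen: "generator n M i h v R" and g: "is_hom n M N g"
    and minimal: "\<forall>s<t. \<not> (\<exists>g. is_hom n M N g \<and> (\<forall>i<n. img M g i = radpow n N s i))"
  shows "g i *\<^sub>v v \<in> radpow n N t i"
proof -
  have rM: "is_rep n l M" using indM by (rule indecomposable_is_rep)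
  have rN: "is_rep n l N" using indN by (rule indecomposable_is_rep)
  have i: "i < n" and v: "v \<in> carrier_vec (dims M i)" using gen unfolding generator_def by auto
  obtain j b w RN where genN: "generator n N j b w RN" using generator_exists[OF indN] by blast
  then have N_vanish: "paths_vanish n N (Suc b)" unfolding generator_def by simp
  have gv: "g i *\<^sub>v v \<in> carrier_vec (dims N i)" using is_hom_carrier[OF g i] v by simp
  have "g i *\<^sub>v v \<in> radpow n N r i" if "r \<le> t" for r
    using that
  proof (induction r)
    case 0
    show ?case
      using path_act_mem_radpow[OF i gv _ i, of 0] i gv by simp
  next
    case (Suc r)
    then have gv_r: "g i *\<^sub>v v \<in> radpow n N r i" by simp
    then obtain k z where k: "k < n" "(k + r) mod n = i" and z: "z \<in> carrier_vec (dims N k)"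
      and gvz: "g i *\<^sub>v v = path_act n N r k z"
      using radpow_iff[OF i] by blast
    show ?case
    proof (cases "path_act n N b k z = 0\<^sub>v (dims N ((k + b) mod n))")
      case True
      then have "z \<in> radpow n N 1 k" by (rule mem_rad_if_longest_path_vanishes[OF indN genN k(1) z])
      then show ?thesis using radpow_path_act[OF rN k(1), of z 1 r] gvz k(2) by simp
    next
      case False
      then obtain Rz where genz: "generator n N k b z Rz"
        using generator_if_longest_path_nonzero[OF rN k(1) z N_vanish] by blast
      have "img M g k' = radpow n N r k'" if "k' < n" for k'
        using img_subset_radpow[OF indM rN gen g gv_r that]
          radpow_subset_img[OF rM indN genz g i v gvz k(2) that] by blast
      moreover have "r < t" using Suc.prems by simp
      ultimately have False using minimal g by blast
      then show ?thesis ..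
    qed
  qed
  then show ?thesis by blast
qed

lemma stably_zero_if_generator_image_in_img:
  assumes indM: "indecomposable n l M" and rN: "is_rep n l N" and gen: "generator n M i h v R"
    and f: "stably_zero n l M N f" and g: "is_hom n M N g" and gv: "g i *\<^sub>v v \<in> img M f i"
  shows "stably_zero n l M N g"
proof -
  have rM: "is_rep n l M" using indM by (rule indecomposable_is_rep)
  have i: "i < n" and v: "v \<in> carrier_vec (dims M i)" and vanish: "paths_vanish n M (Suc h)"
    and R: "R \<in> carrier_mat 1 (dims M ((i + h) mod n))"
    using gen unfolding generator_def by auto
  obtain P G H where P: "projective n l P" and G: "is_hom n M P G" and H: "is_hom n P N H"
    and f_eq: "\<forall>k<n. f k = H k * G k"
    using f unfolding stably_zero_def by blast
  have rP: "is_rep n l P" using P unfolding projective_def by simp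
  obtain u where u: "u \<in> carrier_vec (dims M i)" and fu: "f i *\<^sub>v u = g i *\<^sub>v v"
    using gv unfolding img_def by auto
  define y where "y = G i *\<^sub>v u"
  have y: "y \<in> carrier_vec (dims P i)" unfolding y_def using is_hom_carrier[OF G i] u by simp
  have y_vanish: "path_act n P (Suc h) i y = 0\<^sub>v (dims P ((i + Suc h) mod n))"
  proof -
    have ih: "(i + Suc h) mod n < n" using n_pos by simp
    have "path_act n P (Suc h) i y = G ((i + Suc h) mod n) *\<^sub>v 0\<^sub>v (dims M ((i + Suc h) mod n))"
      using hom_path_act[OF rM rP G i u, of "Suc h"] vanish i u
      unfolding y_def paths_vanish_def by simp
    also have "\<dots> = 0\<^sub>v (dims P ((i + Suc h) mod n))" using is_hom_carrier[OF G ih] by simp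
    finally show ?thesis .
  qed
  define G' where "G' = extend_hom n M P i h R y"
  have G': "is_hom n M P G'"
    unfolding G'_def by (rule extend_hom_is_hom[OF rM rP i R y vanish y_vanish])
  have Hy: "H i *\<^sub>v y = g i *\<^sub>v v"
    using fu f_eq i is_hom_carrier[OF H i] is_hom_carrier[OF G i] u unfolding y_def by simp
  have "g k = H k * G' k" if k: "k < n" for k
  proof -
    have "g k = extend_hom n M N i h R (g i *\<^sub>v v) k" by (rule hom_eq_extend_hom[OF indM rN gen g k])
    also have "\<dots> = H k * G' k"
      unfolding G'_def Hy[symmetric] by (rule hom_mult_extend_hom[OF rM rP rN H i k R y, symmetric])
    finally show ?thesis .
  qed
  then show ?thesis unfolding stably_zero_def using P G' H by blast
qed

end

theorem lemma2p8:
  fixes n l t :: nat and M N :: "'a::field rep" and f :: "nat \<Rightarrow> 'a mat"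
  assumes "alg_closed_type TYPE('a)"
    and "n \<ge> 1"
    and "indecomposable n l M" and "indecomposable n l N"
    and "\<not> projective n l M" and "\<not> projective n l N"
    and "is_hom n M N f" and "\<not> zero_mor n M N f"
    and "\<forall>i<n. img M f i = radpow n N t i"
    and "\<forall>s<t. \<not> (\<exists>g. is_hom n M N g \<and> (\<forall>i<n. img M g i = radpow n N s i))"
  shows "stably_zero n l M N f \<longleftrightarrow> stable_hom_zero n l M N"
proof
  assume "stable_hom_zero n l M N"
  then show "stably_zero n l M N f" using assms(7) unfolding stable_hom_zero_def by blast
next
  assume f_zero: "stably_zero n l M N f"
  have n_pos: "0 < n" using assms(2) by simp
  obtain i h v R where gen: "generator n M i h v R" using generator_exists[OF n_pos assms(3)] by blast
  have i: "i < n" using gen unfolding generator_def by simp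
  show "stable_hom_zero n l M N"
    unfolding stable_hom_zero_def
  proof (intro allI impI)
    fix g assume g: "is_hom n M N g"
    have "g i *\<^sub>v v \<in> radpow n N t i"
      by (rule generator_image_in_radpow[OF n_pos assms(3,4) gen g assms(10)])
    then have "g i *\<^sub>v v \<in> img M f i" using assms(9) i by simp
    then show "stably_zero n l M N g"
      by (rule stably_zero_if_generator_image_in_img[OF n_pos assms(3)
            indecomposable_is_rep[OF assms(4)] gen f_zero g])
  qed
qed

end
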